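(* Let $Z$ be a minimal Banach space not containing an isomorphic copy of $c_0$. If $X$ is a separable Banach space not containing an isomorphic copy of $Z$, then $E_X$ does not contain an isomorphic copy of $Z$ either.
   Context: An infinite-dimensional Banach space $Z$ is minimal if every infinite-dimensional closed subspace of $Z$ contains an isomorphic copy of $Z$. For a separable Banach space $X\neq\{0\}$ and a sequence $(x_n)$ (repetitions allowed) in the unit sphere of $X$ which is norm dense in the unit sphere, $E_X$ is the completion of $c_{00}(\mathbb{N})$ under the norm $\|z\|_{E_X}=\sup_{m\in\mathbb{N}}\|\sum_{n=0}^m z(n)x_n\|_X$; for $X=\{0\}$, $E_X=c_0$. *)

theory Defs
  imports "HOL-Analysis.Analysis" "HOL-Library.Function_Algebras"
begin

instantiation "fun" :: (type, real_vector) real_vector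
begin
definition scaleR_fun :: "real \<Rightarrow> ('a \<Rightarrow> 'b) \<Rightarrow> 'a \<Rightarrow> 'b" where
  "scaleR_fun c f = (\<lambda>x. c *\<^sub>R f x)"
instance
  by standard (auto simp: scaleR_fun_def fun_eq_iff scaleR_add_right scaleR_add_left)
end

text \<open>Real Banach spaces are modelled either as types of class banach (with their norm),
  or as a carrier set of a real vector space together with a norm function on it.\<close>

definition embeds :: "'a::real_vector set \<Rightarrow> ('a \<Rightarrow> real) \<Rightarrow> 'b::real_vector set \<Rightarrow> ('b \<Rightarrow> real) \<Rightarrow> bool" where
  "embeds V N W M \<longleftrightarrow> (\<exists>T.
      (\<forall>x\<in>V. \<forall>y\<in>V. T (x + y) = T x + T y) \<and>
      (\<forall>c. \<forall>x\<in>V. T (c *\<^sub>R x) = c *\<^sub>R T x) \<and>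
      T ` V \<subseteq> W \<and>
      (\<exists>a b. 0 < a \<and> 0 < b \<and> (\<forall>x\<in>V. a * N x \<le> M (T x) \<and> M (T x) \<le> b * N x)))"

definition infinite_dimensional :: "'a::real_vector set \<Rightarrow> bool" where
  "infinite_dimensional S \<longleftrightarrow> (\<exists>B\<subseteq>S. independent B \<and> infinite B)"

definition separable_banach :: "'a::banach itself \<Rightarrow> bool" where
  "separable_banach _ \<longleftrightarrow> (\<exists>D::'a set. countable D \<and> closure D = UNIV)"

definition minimal_banach :: "'a::banach itself \<Rightarrow> bool" where
  "minimal_banach _ \<longleftrightarrow> infinite_dimensional (UNIV::'a set) \<and>
     (\<forall>S::'a set. subspace S \<and> closed S \<and> infinite_dimensional S \<longrightarrow>
        embeds (UNIV::'a set) norm S norm)"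

definition c0_set :: "(nat \<Rightarrow> real) set" where
  "c0_set = {f. f \<longlonglongrightarrow> 0}"

definition c0_norm :: "(nat \<Rightarrow> real) \<Rightarrow> real" where
  "c0_norm f = (SUP n. \<bar>f n\<bar>)"

text \<open>E_X for a sequence xs (dense in the unit sphere of X): the completion of c00 under
  the norm sup_m of the norms of partial sums, realised concretely as the space of scalar
  sequences z whose partial sums of z n xs n converge in X, with the same norm.\<close>
definition E_set :: "(nat \<Rightarrow> 'a::banach) \<Rightarrow> (nat \<Rightarrow> real) set" where
  "E_set xs = {z. convergent (\<lambda>m. \<Sum>n\<le>m. z n *\<^sub>R xs n)}"

definition E_norm :: "(nat \<Rightarrow> 'a::banach) \<Rightarrow> (nat \<Rightarrow> real) \<Rightarrow> real" where
  "E_norm xs z = (SUP m. norm (\<Sum>n\<le>m. z n *\<^sub>R xs n))"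

end

theory Submission
  imports Defs
begin

text \<open>Both \<open>c\<^sub>0\<close> and \<open>E\<^sub>X\<close> carry a sequence of seminorms whose supremum is the norm:
  the absolute values of the coordinates, respectively the norms of the partial sums
  \<open>\<Sum>n\<le>m. z n x\<^sub>n\<close>. An embedding transports them to \<open>Z\<close>. If every coordinate kernel
  \<open>{u. \<forall>n<p. T u n = 0}\<close> contains a vector whose seminorms are eventually small compared
  with its norm, a gliding-hump argument produces a block sequence in \<open>Z\<close> equivalent to the
  unit vector basis of \<open>c\<^sub>0\<close>, which is excluded. For \<open>c\<^sub>0\<close> such vectors exist because
  coordinates tend to zero. For \<open>E\<^sub>X\<close>, a kernel without them is a closed infinite-dimensional
  subspace on which the summing map into \<open>X\<close> is bounded below; by minimality \<open>Z\<close> embeds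
  into that kernel and hence into \<open>X\<close>, which is excluded as well.\<close>

lemma infinite_dimensional_iff_not_finite_span:
  "infinite_dimensional S \<longleftrightarrow> (\<forall>B. finite B \<longrightarrow> \<not> S \<subseteq> span B)"
proof
  assume "infinite_dimensional S"
  then obtain C where C: "C \<subseteq> S" "independent C" "infinite C"
    unfolding infinite_dimensional_def by blast
  show "\<forall>B. finite B \<longrightarrow> \<not> S \<subseteq> span B"
  proof (intro allI impI notI)
    fix B :: "'a set" assume B: "finite B" "S \<subseteq> span B"
    obtain D where D: "D \<subseteq> C" "finite D" "card D = Suc (card B)"
      using infinite_arbitrarily_large[OF C(3)] by blast
    have "independent D" using C(2) D(1) independent_mono by blast
    then have "card D \<le> card B"
      using independent_span_bound[OF B(1)] D(1) C(1) B(2) by blast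
    then show False using D(3) by simp
  qed
next
  assume fin: "\<forall>B. finite B \<longrightarrow> \<not> S \<subseteq> span B"
  obtain B where "B \<subseteq> S" "independent B" "S \<subseteq> span B"
    using maximal_independent_subset by blast
  with fin show "infinite_dimensional S"
    unfolding infinite_dimensional_def by blast
qed

lemma infinite_dimensional_kernel:
  fixes f :: "'a::real_vector \<Rightarrow> real"
  assumes S: "subspace S" and f: "linear f" and inf: "infinite_dimensional S"
  shows "infinite_dimensional (S \<inter> {x. f x = 0})"
  unfolding infinite_dimensional_iff_not_finite_span
proof (intro allI impI notI)
  fix B :: "'a set" assume B: "finite B" "S \<inter> {x. f x = 0} \<subseteq> span B"
  have "S \<subseteq> span (insert b B)" if b: "b \<in> S" "f b \<noteq> 0" for b
  proof
    fix x assume x: "x \<in> S"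
    define c where "c = f x / f b"
    have "x - c *\<^sub>R b \<in> S \<inter> {x. f x = 0}"
      using S x b f by (simp add: c_def subspace_diff subspace_scale linear_diff linear_scale)
    then have "x - c *\<^sub>R b \<in> span (insert b B)"
      using B(2) span_mono[of B "insert b B"] by blast
    then have "x - c *\<^sub>R b + c *\<^sub>R b \<in> span (insert b B)"
      by (intro span_add span_scale) (simp_all add: span_base)
    then show "x \<in> span (insert b B)" by simp
  qed
  moreover have "S \<subseteq> span B" if "\<forall>b\<in>S. f b = 0"
    using that B(2) by blast
  ultimately show False
    using inf B(1) unfolding infinite_dimensional_iff_not_finite_span
    by (meson finite_insert)
qed

lemma linear_coordinate:
  fixes T :: "'a::real_vector \<Rightarrow> 'i \<Rightarrow> 'b::real_vector"
  assumes "linear T"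
  shows "linear (\<lambda>x. T x n)"
  using assms by (intro linearI) (simp_all add: linear_add linear_scale scaleR_fun_def)

lemma subspace_coordinate_kernel:
  fixes T :: "'a::real_vector \<Rightarrow> nat \<Rightarrow> real"
  assumes "linear T"
  shows "subspace {x. \<forall>n<p. T x n = 0}"
  using assms unfolding subspace_def by (simp add: linear_0 linear_add linear_scale scaleR_fun_def)

lemma infinite_dimensional_coordinate_kernel:
  fixes T :: "'a::real_vector \<Rightarrow> nat \<Rightarrow> real"
  assumes T: "linear T" and inf: "infinite_dimensional (UNIV::'a set)"
  shows "infinite_dimensional {x. \<forall>n<p. T x n = 0}"
proof (induction p)
  case 0
  then show ?case using inf by simp
next
  case (Suc p)
  have "{x. \<forall>n<Suc p. T x n = 0} = {x. \<forall>n<p. T x n = 0} \<inter> {x. T x p = 0}"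
    by (auto simp: less_Suc_eq)
  then show ?case
    using infinite_dimensional_kernel[OF subspace_coordinate_kernel[OF T]
        linear_coordinate[OF T] Suc] by simp
qed

lemma infinite_dimensional_ex_nonzero:
  "infinite_dimensional S \<Longrightarrow> \<exists>x\<in>S. x \<noteq> 0"
  unfolding infinite_dimensional_def
  by (metis dependent_zero finite.emptyI subset_iff ex_in_conv)

lemma embeds_UNIV_iff:
  "embeds (UNIV::'a::real_vector set) N W M \<longleftrightarrow>
     (\<exists>T. linear T \<and> range T \<subseteq> W \<and>
        (\<exists>a b. 0 < a \<and> 0 < b \<and> (\<forall>x. a * N x \<le> M (T x) \<and> M (T x) \<le> b * N x)))"
  unfolding embeds_def linear_iff by auto

lemma embeds_UNIV_E:
  assumes "embeds (UNIV::'a::real_vector set) N W M"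
  obtains T a b where "linear T" "range T \<subseteq> W" "0 < a" "0 < b"
    "\<And>x. a * N x \<le> M (T x) \<and> M (T x) \<le> b * N x"
  using assms unfolding embeds_UNIV_iff by blast

lemma c0_set_bdd_above: "a \<in> c0_set \<Longrightarrow> bdd_above (range (\<lambda>n. \<bar>a n\<bar>))"
proof -
  assume "a \<in> c0_set"
  then have "Bseq a" unfolding c0_set_def by (blast intro: convergent_imp_Bseq convergentI)
  then show ?thesis using Bseq_bdd_above'[of a] by simp
qed

lemma abs_le_c0_norm: "a \<in> c0_set \<Longrightarrow> \<bar>a n\<bar> \<le> c0_norm a"
  unfolding c0_norm_def by (rule cSUP_upper) (simp_all add: c0_set_bdd_above)

lemma c0_norm_nonneg: "a \<in> c0_set \<Longrightarrow> 0 \<le> c0_norm a"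
  using abs_le_c0_norm[of a 0] by linarith

lemma c0_norm_le: "(\<And>n. \<bar>a n\<bar> \<le> M) \<Longrightarrow> c0_norm a \<le> M"
  unfolding c0_norm_def by (rule cSUP_least) simp_all

lemma summable_if_block_upper_estimate:
  fixes u :: "nat \<Rightarrow> 'a::banach"
  assumes C: "0 < C"
    and upper: "\<And>A a M. finite A \<Longrightarrow> 0 \<le> M \<Longrightarrow> (\<And>k. k \<in> A \<Longrightarrow> \<bar>a k\<bar> \<le> M) \<Longrightarrow>
                  norm (\<Sum>k\<in>A. a k *\<^sub>R u k) \<le> C * M"
    and a: "a \<in> c0_set"
  shows "summable (\<lambda>k. a k *\<^sub>R u k)"
  unfolding summable_Cauchy
proof (intro allI impI)
  fix e :: real assume e: "0 < e"
  have "a \<longlonglongrightarrow> 0" using a unfolding c0_set_def by simp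
  moreover have "0 < e / (2 * C)" using e C by simp
  ultimately obtain N where N: "\<And>n. N \<le> n \<Longrightarrow> \<bar>a n\<bar> < e / (2 * C)"
    unfolding LIMSEQ_iff by (metis diff_zero real_norm_def)
  have "norm (\<Sum>k\<in>{m..<n}. a k *\<^sub>R u k) < e" if "N \<le> m" for m n
  proof -
    have "norm (\<Sum>k\<in>{m..<n}. a k *\<^sub>R u k) \<le> C * (e / (2 * C))"
    proof (rule upper)
      show "\<bar>a k\<bar> \<le> e / (2 * C)" if "k \<in> {m..<n}" for k
        using N[of k] that \<open>N \<le> m\<close> by simp
    qed (use e C in simp_all)
    also have "\<dots> < e" using e C by simp
    finally show ?thesis .
  qed
  then show "\<exists>N. \<forall>m\<ge>N. \<forall>n. norm (\<Sum>k\<in>{m..<n}. a k *\<^sub>R u k) < e" by blast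
qed

lemma embeds_c0_if_block_estimates:
  fixes u :: "nat \<Rightarrow> 'a::banach"
  assumes C: "0 < C" and c: "0 < c" and dc: "d < c"
    and upper: "\<And>A a M. finite A \<Longrightarrow> 0 \<le> M \<Longrightarrow> (\<And>k. k \<in> A \<Longrightarrow> \<bar>a k\<bar> \<le> M) \<Longrightarrow>
                  norm (\<Sum>k\<in>A. a k *\<^sub>R u k) \<le> C * M"
    and lower: "\<And>j K a M. j < K \<Longrightarrow> 0 \<le> M \<Longrightarrow> (\<And>k. k < K \<Longrightarrow> \<bar>a k\<bar> \<le> M) \<Longrightarrow>
                  c * \<bar>a j\<bar> - d * M \<le> norm (\<Sum>k<K. a k *\<^sub>R u k)"
  shows "embeds c0_set c0_norm (UNIV::'a set) norm"
proof -
  define \<Phi> where "\<Phi> a = (\<Sum>k. a k *\<^sub>R u k)" for a :: "nat \<Rightarrow> real"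
  have summable: "summable (\<lambda>k. a k *\<^sub>R u k)" if "a \<in> c0_set" for a
    using C upper that by (rule summable_if_block_upper_estimate)
  have lim: "(\<lambda>K. \<Sum>k<K. a k *\<^sub>R u k) \<longlonglongrightarrow> \<Phi> a" if "a \<in> c0_set" for a
    unfolding \<Phi>_def using summable[OF that] by (rule summable_LIMSEQ)
  have add: "\<Phi> (a + b) = \<Phi> a + \<Phi> b" if "a \<in> c0_set" "b \<in> c0_set" for a b
    unfolding \<Phi>_def using suminf_add[OF summable[OF that(1)] summable[OF that(2)]]
    by (simp add: scaleR_add_left)
  have scale: "\<Phi> (r *\<^sub>R a) = r *\<^sub>R \<Phi> a" if "a \<in> c0_set" for a r
    unfolding \<Phi>_def scaleR_fun_def
    using bounded_linear.suminf[OF bounded_linear_scaleR_right summable[OF that]] by simp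
  have ub: "norm (\<Phi> a) \<le> C * c0_norm a" if a: "a \<in> c0_set" for a
  proof (rule tendsto_upperbound[OF tendsto_norm[OF lim[OF a]]])
    show "\<forall>\<^sub>F K in sequentially. norm (\<Sum>k<K. a k *\<^sub>R u k) \<le> C * c0_norm a"
      using a by (intro always_eventually allI upper) (simp_all add: abs_le_c0_norm c0_norm_nonneg)
  qed simp
  have lb: "(c - d) * c0_norm a \<le> norm (\<Phi> a)" if a: "a \<in> c0_set" for a
  proof -
    have "c * \<bar>a j\<bar> - d * c0_norm a \<le> norm (\<Phi> a)" for j
    proof (rule tendsto_lowerbound[OF tendsto_norm[OF lim[OF a]]])
      have "c * \<bar>a j\<bar> - d * c0_norm a \<le> norm (\<Sum>k<K. a k *\<^sub>R u k)" if "j < K" for K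
        using a that by (intro lower) (simp_all add: abs_le_c0_norm c0_norm_nonneg)
      then show "\<forall>\<^sub>F K in sequentially. c * \<bar>a j\<bar> - d * c0_norm a \<le> norm (\<Sum>k<K. a k *\<^sub>R u k)"
        unfolding eventually_sequentially by (metis Suc_le_eq)
    qed simp
    then have "c0_norm a \<le> (norm (\<Phi> a) + d * c0_norm a) / c"
      using c by (intro c0_norm_le) (simp add: field_simps)
    then show ?thesis using c by (simp add: field_simps)
  qed
  show ?thesis
    unfolding embeds_def
  proof (intro exI[of _ \<Phi>] conjI ballI allI)
    show "\<exists>a b. 0 < a \<and> 0 < b \<and>
        (\<forall>x\<in>c0_set. a * c0_norm x \<le> norm (\<Phi> x) \<and> norm (\<Phi> x) \<le> b * c0_norm x)"
      using ub lb C dc by (intro exI[of _ "c - d"] exI[of _ C]) auto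
  qed (simp_all add: add scale)
qed

text \<open>Tolerances for the gliding hump: each is at most \<open>1/16\<close> and they sum to at most
  \<open>1/8\<close>, which yields the block estimates \<open>2 M\<close> from above and \<open>3/4 \<bar>a\<^sub>j\<bar> - M/8\<close> from
  below.\<close>
definition hump_tol :: "nat \<Rightarrow> real" where
  "hump_tol k = 1 / (16 * 2 ^ k)"

lemma hump_tol_pos: "0 < hump_tol k"
  by (simp add: hump_tol_def)

lemma hump_tol_le: "hump_tol k \<le> 1 / 16"
  by (simp add: hump_tol_def field_simps)

lemma sum_hump_tol_le:
  assumes "finite F"
  shows "(\<Sum>k\<in>F. hump_tol k) \<le> 1 / 8"
proof -
  obtain N where "F \<subseteq> {..<N}"
    using assms finite_nat_iff_bounded by blast
  then have "(\<Sum>k\<in>F. hump_tol k) \<le> (\<Sum>k<N. hump_tol k)"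
    by (intro sum_mono2) (simp_all add: less_imp_le hump_tol_pos)
  also have "(\<Sum>k<N. hump_tol k) = 1 / 8 - 1 / (8 * 2 ^ N)"
    by (induction N) (simp_all add: hump_tol_def field_simps)
  also have "\<dots> \<le> 1 / 8" by simp
  finally show ?thesis .
qed

locale seminorm_sequence =
  fixes q :: "nat \<Rightarrow> 'a::real_vector \<Rightarrow> real"
  assumes triangle: "q m (x + y) \<le> q m x + q m y"
    and scale: "q m (c *\<^sub>R x) = \<bar>c\<bar> * q m x"
    and bounded: "bdd_above (range (\<lambda>m. q m x))"
begin

definition qsup :: "'a \<Rightarrow> real" where
  "qsup x = (SUP m. q m x)"

lemma zero [simp]: "q m 0 = 0"
  using scale[of m 0 0] by simp

lemma minus: "q m (- x) = q m x"
  using scale[of m "-1" x] by simp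

lemma nonneg: "0 \<le> q m x"
  using triangle[of m x "- x"] minus[of m x] by simp

lemma reverse_triangle: "q m x \<le> q m (x + y) + q m y"
  using triangle[of m "x + y" "- y"] minus[of m y] by simp

lemma sum_le: "finite F \<Longrightarrow> q m (\<Sum>k\<in>F. f k) \<le> (\<Sum>k\<in>F. q m (f k))"
proof (induction F rule: finite_induct)
  case (insert a F)
  then show ?case using triangle[of m "f a" "sum f F"] by simp
qed simp

lemma le_qsup: "q m x \<le> qsup x"
  unfolding qsup_def by (rule cSUP_upper) (simp_all add: bounded)

lemma qsup_le: "(\<And>m. q m x \<le> c) \<Longrightarrow> qsup x \<le> c"
  unfolding qsup_def by (rule cSUP_least) simp_all

lemma qsup_scale: "qsup (c *\<^sub>R x) = \<bar>c\<bar> * qsup x"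
proof -
  have le: "qsup (d *\<^sub>R y) \<le> \<bar>d\<bar> * qsup y" for d y
    by (rule qsup_le) (simp add: scale le_qsup mult_left_mono)
  show ?thesis
  proof (cases "c = 0")
    case True
    then show ?thesis using le[of 0 x] nonneg[of 0 0] le_qsup[of 0 0] by simp
  next
    case False
    have "qsup x \<le> \<bar>inverse c\<bar> * qsup (c *\<^sub>R x)"
      using le[of "inverse c" "c *\<^sub>R x"] False by simp
    then have "\<bar>c\<bar> * qsup x \<le> qsup (c *\<^sub>R x)"
      using False by (simp add: field_simps abs_inverse)
    with le[of c x] show ?thesis by simp
  qed
qed

lemma gliding_hump_sequence:
  assumes small_tails: "\<And>p \<delta>. 0 < \<delta> \<Longrightarrow> \<exists>u. 0 < qsup u \<and> (\<forall>m<p. q m u = 0) \<and>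
                           (\<forall>\<^sub>F m in sequentially. q m u \<le> \<delta> * qsup u)"
  obtains P :: "nat \<Rightarrow> nat" and u :: "nat \<Rightarrow> 'a"
  where "strict_mono P" "\<And>k. qsup (u k) = 1"
    "\<And>m k. m < P k \<Longrightarrow> q m (u k) = 0"
    "\<And>m k. P (Suc k) \<le> m \<Longrightarrow> q m (u k) \<le> hump_tol k"
proof -
  have "\<exists>v M. qsup v = 1 \<and> (\<forall>m<p. q m v = 0) \<and> (\<forall>m\<ge>M. q m v \<le> hump_tol k)" for p k
  proof -
    obtain u where u: "0 < qsup u" "\<forall>m<p. q m u = 0"
      and "\<forall>\<^sub>F m in sequentially. q m u \<le> hump_tol k * qsup u"
      using small_tails[OF hump_tol_pos] by blast
    then obtain M where M: "\<forall>m\<ge>M. q m u \<le> hump_tol k * qsup u"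
      unfolding eventually_sequentially by blast
    define v where "v = inverse (qsup u) *\<^sub>R u"
    have "qsup v = 1" "\<forall>m<p. q m v = 0" "\<forall>m\<ge>M. q m v \<le> hump_tol k"
      using u M by (simp_all add: v_def qsup_scale scale field_simps)
    then show ?thesis by blast
  qed
  then obtain v G where v: "\<And>p k. qsup (v p k) = 1" "\<And>p k m. m < p \<Longrightarrow> q m (v p k) = 0"
    and G: "\<And>p k m. G p k \<le> m \<Longrightarrow> q m (v p k) \<le> hump_tol k"
    by metis
  define P where "P = rec_nat 0 (\<lambda>k p. max (Suc p) (G p k))"
  have P_Suc: "P (Suc k) = max (Suc (P k)) (G (P k) k)" for k
    by (simp add: P_def)
  show ?thesis
  proof
    show "strict_mono P" by (rule strict_monoI_Suc) (simp add: P_Suc)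
    show "P (Suc k) \<le> m \<Longrightarrow> q m (v (P k) k) \<le> hump_tol k" for m k
      using G by (simp add: P_Suc)
  qed (use v in simp_all)
qed

end

locale gliding_hump = seminorm_sequence q for q :: "nat \<Rightarrow> 'a::real_vector \<Rightarrow> real" +
  fixes u :: "nat \<Rightarrow> 'a" and P :: "nat \<Rightarrow> nat"
  assumes strict_mono_P: "strict_mono P"
    and qsup_u: "qsup (u k) = 1"
    and u_head: "m < P k \<Longrightarrow> q m (u k) = 0"
    and u_tail: "P (Suc k) \<le> m \<Longrightarrow> q m (u k) \<le> hump_tol k"
begin

lemma P_mono: "k \<le> j \<Longrightarrow> P k \<le> P j"
  using strict_mono_P strict_mono_less_eq by blast

lemma q_u_le: "q m (u k) \<le> hump_tol k + (if P k \<le> m \<and> m < P (Suc k) then 1 else 0)"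
proof -
  consider "m < P k" | "P (Suc k) \<le> m" | "P k \<le> m \<and> m < P (Suc k)" by linarith
  then show ?thesis
  proof cases
    case 1
    then show ?thesis using u_head[of m k] hump_tol_pos[of k] by simp
  next
    case 2
    then show ?thesis using u_tail[of k m] by simp
  next
    case 3
    then show ?thesis using le_qsup[of m "u k"] qsup_u[of k] hump_tol_pos[of k] by simp
  qed
qed

lemma card_humps_at_le_1:
  assumes "finite A"
  shows "card {k\<in>A. P k \<le> m \<and> m < P (Suc k)} \<le> 1" (is "card ?I \<le> 1")
proof -
  have "k1 = k2" if "k1 \<in> ?I" "k2 \<in> ?I" for k1 k2
  proof (rule ccontr)
    assume "k1 \<noteq> k2"
    then consider "Suc k1 \<le> k2" | "Suc k2 \<le> k1" by linarith
    then show False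
      by cases (use that P_mono[of "Suc k1" k2] P_mono[of "Suc k2" k1] in auto)
  qed
  then show ?thesis
    using card_le_Suc0_iff_eq[of ?I] assms by simp
qed

lemma qsup_block_sum_le:
  assumes A: "finite A" and M: "0 \<le> M" and a: "\<And>k. k \<in> A \<Longrightarrow> \<bar>a k\<bar> \<le> M"
  shows "qsup (\<Sum>k\<in>A. a k *\<^sub>R u k) \<le> 2 * M"
proof (rule qsup_le)
  fix m
  let ?hump = "\<lambda>k. if P k \<le> m \<and> m < P (Suc k) then 1 else 0 :: real"
  have "(\<Sum>k\<in>A. ?hump k) = card {k\<in>A. P k \<le> m \<and> m < P (Suc k)}"
    using A by (simp add: sum.If_cases Int_def conj_commute)
  then have humps: "(\<Sum>k\<in>A. ?hump k) \<le> 1"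
    using card_humps_at_le_1[OF A, of m] by simp
  have "q m (\<Sum>k\<in>A. a k *\<^sub>R u k) \<le> (\<Sum>k\<in>A. \<bar>a k\<bar> * q m (u k))"
    using sum_le[OF A, of m "\<lambda>k. a k *\<^sub>R u k"] by (simp add: scale)
  also have "\<dots> \<le> (\<Sum>k\<in>A. M * (hump_tol k + ?hump k))"
    by (intro sum_mono mult_mono a q_u_le) (simp_all add: nonneg M)
  also have "\<dots> = M * ((\<Sum>k\<in>A. hump_tol k) + (\<Sum>k\<in>A. ?hump k))"
    by (simp add: sum_distrib_left distrib_left sum.distrib)
  also have "\<dots> \<le> M * (1 / 8 + 1)"
    using M sum_hump_tol_le[OF A] humps by (intro mult_left_mono add_mono) simp_all
  also have "\<dots> \<le> 2 * M" using M by simp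
  finally show "q m (\<Sum>k\<in>A. a k *\<^sub>R u k) \<le> 2 * M" .
qed

text \<open>At an index where the \<open>j\<close>-th hump is large, all other blocks are below their
  tolerances, so the \<open>j\<close>-th coefficient survives in the block sum.\<close>
lemma qsup_block_sum_ge:
  assumes j: "j < K" and M: "0 \<le> M" and a: "\<And>k. k < K \<Longrightarrow> \<bar>a k\<bar> \<le> M"
  shows "3 / 4 * \<bar>a j\<bar> - M / 8 \<le> qsup (\<Sum>k<K. a k *\<^sub>R u k)"
proof -
  have "3 / 4 < qsup (u j)" using qsup_u by simp
  then have "\<exists>m. 3 / 4 < q m (u j)"
    unfolding qsup_def using less_cSUP_iff[of UNIV, OF _ bounded] by blast
  then obtain m where m: "3 / 4 < q m (u j)" by blast
  have m_ge: "P j \<le> m" using m u_head[of m j] by fastforce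
  have m_less: "m < P (Suc j)" using m u_tail[of j m] hump_tol_le[of j] by fastforce
  define R where "R = {..<K} - {j}"
  have small: "q m (u k) \<le> hump_tol k" if "k \<in> R" for k
  proof (cases "k < j")
    case True
    then show ?thesis using P_mono[of "Suc k" j] m_ge by (intro u_tail) simp
  next
    case False
    then have "m < P k" using that P_mono[of "Suc j" k] m_less by (simp add: R_def)
    then show ?thesis using u_head hump_tol_pos[of k] by simp
  qed
  have "q m (\<Sum>k\<in>R. a k *\<^sub>R u k) \<le> (\<Sum>k\<in>R. \<bar>a k\<bar> * q m (u k))"
    using sum_le[of R m "\<lambda>k. a k *\<^sub>R u k"] by (simp add: R_def scale)
  also have "\<dots> \<le> (\<Sum>k\<in>R. M * hump_tol k)"
    by (intro sum_mono mult_mono a small) (simp_all add: nonneg M R_def)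
  also have "\<dots> = M * (\<Sum>k\<in>R. hump_tol k)" by (simp add: sum_distrib_left)
  also have "\<dots> \<le> M * (1 / 8)"
    using sum_hump_tol_le[of R] M by (intro mult_left_mono) (simp_all add: R_def)
  finally have rest: "q m (\<Sum>k\<in>R. a k *\<^sub>R u k) \<le> M / 8" by simp
  have split: "(\<Sum>k<K. a k *\<^sub>R u k) = a j *\<^sub>R u j + (\<Sum>k\<in>R. a k *\<^sub>R u k)"
    using j by (simp add: R_def sum.remove)
  have "3 / 4 * \<bar>a j\<bar> \<le> q m (a j *\<^sub>R u j)"
    using m mult_left_mono[of "3 / 4" "q m (u j)" "\<bar>a j\<bar>"] by (simp add: scale mult.commute)
  also have "\<dots> \<le> q m (\<Sum>k<K. a k *\<^sub>R u k) + q m (\<Sum>k\<in>R. a k *\<^sub>R u k)"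
    unfolding split by (rule reverse_triangle)
  also have "\<dots> \<le> qsup (\<Sum>k<K. a k *\<^sub>R u k) + M / 8"
    using rest le_qsup by (rule add_mono[rotated])
  finally show ?thesis by simp
qed

end

lemma embeds_c0_if_small_tails:
  fixes q :: "nat \<Rightarrow> 'a::banach \<Rightarrow> real"
  assumes "seminorm_sequence q"
    and \<alpha>: "0 < \<alpha>" and \<beta>: "0 < \<beta>"
    and equivalent: "\<And>x. \<alpha> * norm x \<le> seminorm_sequence.qsup q x \<and>
                         seminorm_sequence.qsup q x \<le> \<beta> * norm x"
    and small_tails: "\<And>p \<delta>. 0 < \<delta> \<Longrightarrow> \<exists>u. u \<noteq> 0 \<and> (\<forall>m<p. q m u = 0) \<and>
                         (\<forall>\<^sub>F m in sequentially. q m u \<le> \<delta> * seminorm_sequence.qsup q u)"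
  shows "embeds c0_set c0_norm (UNIV::'a set) norm"
proof -
  interpret seminorm_sequence q by fact
  have "0 < qsup u" if "u \<noteq> 0" for u
    using equivalent[of u] \<alpha> that by (meson less_le_trans mult_pos_pos zero_less_norm_iff)
  then have "\<exists>u. 0 < qsup u \<and> (\<forall>m<p. q m u = 0) \<and> (\<forall>\<^sub>F m in sequentially. q m u \<le> \<delta> * qsup u)"
    if "0 < \<delta>" for p \<delta>
    using small_tails[OF that, of p] by blast
  then obtain P :: "nat \<Rightarrow> nat" and u :: "nat \<Rightarrow> 'a" where "strict_mono P" "\<And>k. qsup (u k) = 1"
    "\<And>m k. m < P k \<Longrightarrow> q m (u k) = 0" "\<And>m k. P (Suc k) \<le> m \<Longrightarrow> q m (u k) \<le> hump_tol k"
    using gliding_hump_sequence by blast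
  then interpret gliding_hump q u P
    by unfold_locales simp_all
  show ?thesis
  proof (rule embeds_c0_if_block_estimates[where C = "2 / \<alpha>" and c = "3 / (4 * \<beta>)"
        and d = "1 / (8 * \<beta>)"])
    show "norm (\<Sum>k\<in>A. a k *\<^sub>R u k) \<le> 2 / \<alpha> * M"
      if "finite A" "0 \<le> M" "\<And>k. k \<in> A \<Longrightarrow> \<bar>a k\<bar> \<le> M" for A a M
    proof -
      have "qsup (\<Sum>k\<in>A. a k *\<^sub>R u k) \<le> 2 * M"
        using that by (rule qsup_block_sum_le)
      then show ?thesis
        using equivalent[of "\<Sum>k\<in>A. a k *\<^sub>R u k"] \<alpha> by (simp add: field_simps)
    qed
    show "3 / (4 * \<beta>) * \<bar>a j\<bar> - 1 / (8 * \<beta>) * M \<le> norm (\<Sum>k<K. a k *\<^sub>R u k)"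
      if "j < K" "0 \<le> M" "\<And>k. k < K \<Longrightarrow> \<bar>a k\<bar> \<le> M" for j K a M
    proof -
      have "3 / 4 * \<bar>a j\<bar> - M / 8 \<le> qsup (\<Sum>k<K. a k *\<^sub>R u k)"
        using that by (rule qsup_block_sum_ge)
      then show ?thesis
        using equivalent[of "\<Sum>k<K. a k *\<^sub>R u k"] \<beta> by (simp add: field_simps)
    qed
  qed (use \<alpha> \<beta> in \<open>simp_all add: frac_less2\<close>)
qed

lemma seminorm_sequence_norm_linear:
  fixes L :: "nat \<Rightarrow> 'a::real_vector \<Rightarrow> 'b::real_normed_vector"
  assumes "\<And>m. linear (L m)" and "\<And>x. bdd_above (range (\<lambda>m. norm (L m x)))"
  shows "seminorm_sequence (\<lambda>m x. norm (L m x))"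
  using assms by unfold_locales (simp_all add: linear_add linear_scale norm_triangle_ineq)

lemma closed_coordinate_kernel:
  fixes T :: "'a::real_normed_vector \<Rightarrow> nat \<Rightarrow> real"
  assumes "\<And>n. bounded_linear (\<lambda>x. T x n)"
  shows "closed {x. \<forall>n<p. T x n = 0}"
proof -
  have "{x. \<forall>n<p. T x n = 0} = (\<Inter>n<p. {x. T x n = 0})" by auto
  moreover have "closed {x. T x n = 0}" for n
    using assms[of n] by (intro closed_Collect_eq) (simp_all add: linear_continuous_on)
  ultimately show ?thesis by auto
qed

lemma embeds_if_bounded_below_on_subspace:
  fixes S :: "'z::banach \<Rightarrow> 'x::real_normed_vector"
  assumes "minimal_banach TYPE('z)"
    and K: "subspace K" "closed K" "infinite_dimensional K"
    and S: "linear S" and \<delta>: "0 < \<delta>" and C: "0 < C"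
    and below: "\<And>x. x \<in> K \<Longrightarrow> \<delta> * norm x \<le> norm (S x)"
    and above: "\<And>x. norm (S x) \<le> C * norm x"
  shows "embeds (UNIV::'z set) norm (UNIV::'x set) norm"
proof -
  obtain R :: "'z \<Rightarrow> 'z" and a b where R: "linear R" "range R \<subseteq> K" "0 < a" "0 < b"
    and R_bounds: "\<And>x. a * norm x \<le> norm (R x) \<and> norm (R x) \<le> b * norm x"
    using assms(1) K unfolding minimal_banach_def embeds_UNIV_iff by blast
  show ?thesis
    unfolding embeds_UNIV_iff
  proof (intro exI conjI allI)
    show "linear (S \<circ> R)" using R(1) S by (rule linear_compose)
    show "0 < \<delta> * a" "0 < C * b" using \<delta> C R by simp_all
    fix x
    have "\<delta> * a * norm x \<le> \<delta> * norm (R x)"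
      using R_bounds[of x] \<delta> by (simp add: mult.assoc)
    also have "\<dots> \<le> norm ((S \<circ> R) x)" using below R(2) by auto
    finally show "\<delta> * a * norm x \<le> norm ((S \<circ> R) x)" .
    have "norm ((S \<circ> R) x) \<le> C * norm (R x)" using above by simp
    also have "\<dots> \<le> C * (b * norm x)" using R_bounds[of x] C by simp
    finally show "norm ((S \<circ> R) x) \<le> C * b * norm x" by (simp add: mult.assoc)
  qed simp
qed

lemma minimal_not_embeds_into_c0:
  assumes minimal: "minimal_banach TYPE('z::banach)"
    and no_c0: "\<not> embeds c0_set c0_norm (UNIV::'z set) norm"
  shows "\<not> embeds (UNIV::'z set) norm c0_set c0_norm"
proof
  assume "embeds (UNIV::'z set) norm c0_set c0_norm"
  then obtain T :: "'z \<Rightarrow> nat \<Rightarrow> real" and \<alpha> \<beta> where T: "linear T" "range T \<subseteq> c0_set"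
    and \<alpha>: "0 < \<alpha>" and \<beta>: "0 < \<beta>"
    and equivalent: "\<And>x. \<alpha> * norm x \<le> c0_norm (T x) \<and> c0_norm (T x) \<le> \<beta> * norm x"
    by (rule embeds_UNIV_E) blast
  have c0: "T x \<in> c0_set" for x using T(2) by blast
  let ?q = "\<lambda>m x. norm (T x m)"
  interpret seminorm_sequence ?q
    using linear_coordinate[OF T(1)] c0_set_bdd_above[OF c0]
    by (intro seminorm_sequence_norm_linear) simp_all
  have qsup_eq: "qsup x = c0_norm (T x)" for x
    unfolding qsup_def c0_norm_def by simp
  have "embeds c0_set c0_norm (UNIV::'z set) norm"
  proof (rule embeds_c0_if_small_tails[OF seminorm_sequence_axioms \<alpha> \<beta>])
    show "\<alpha> * norm x \<le> qsup x \<and> qsup x \<le> \<beta> * norm x" for x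
      using equivalent qsup_eq by simp
    fix p :: nat and \<delta> :: real assume \<delta>: "0 < \<delta>"
    have "infinite_dimensional (UNIV::'z set)" using minimal by (simp add: minimal_banach_def)
    then obtain u where u: "\<forall>n<p. T u n = 0" "u \<noteq> 0"
      using infinite_dimensional_ex_nonzero[OF infinite_dimensional_coordinate_kernel[OF T(1)]]
      by blast
    have "0 < \<alpha> * norm u" using \<alpha> u(2) by simp
    then have "0 < \<delta> * qsup u" using \<delta> equivalent[of u] qsup_eq[of u] by simp
    moreover have "(\<lambda>m. norm (T u m)) \<longlonglongrightarrow> 0"
      using c0[of u] tendsto_norm_zero[of "T u"] by (simp add: c0_set_def)
    ultimately have "\<forall>\<^sub>F m in sequentially. norm (T u m) < \<delta> * qsup u"
      by (rule order_tendstoD(2)[rotated])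
    then have "\<forall>\<^sub>F m in sequentially. norm (T u m) \<le> \<delta> * qsup u"
      by (rule eventually_mono) simp
    with u show "\<exists>u. u \<noteq> 0 \<and> (\<forall>m<p. ?q m u = 0) \<and> (\<forall>\<^sub>F m in sequentially. ?q m u \<le> \<delta> * qsup u)"
      by auto
  qed
  with no_c0 show False by contradiction
qed

lemma exists_coordinate_kernel_element_with_small_image:
  fixes T :: "'z::banach \<Rightarrow> nat \<Rightarrow> real" and S :: "'z \<Rightarrow> 'x::real_normed_vector"
  assumes minimal: "minimal_banach TYPE('z)"
    and no_embedding: "\<not> embeds (UNIV::'z set) norm (UNIV::'x set) norm"
    and T: "linear T" "\<And>n. bounded_linear (\<lambda>x. T x n)"
    and S: "linear S" "\<And>x. norm (S x) \<le> C * norm x" and C: "0 < C"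
    and \<delta>: "0 < \<delta>"
  shows "\<exists>u. (\<forall>n<p. T u n = 0) \<and> u \<noteq> 0 \<and> norm (S u) < \<delta> * norm u"
proof (rule ccontr)
  let ?K = "{x. \<forall>n<p. T x n = 0}"
  assume "\<not> ?thesis"
  then have "\<delta> * norm x \<le> norm (S x)" if "x \<in> ?K" for x
    using that by (cases "x = 0") (auto simp: not_less)
  moreover have "infinite_dimensional ?K"
    using minimal T(1) by (simp add: minimal_banach_def infinite_dimensional_coordinate_kernel)
  ultimately have "embeds (UNIV::'z set) norm (UNIV::'x set) norm"
    using embeds_if_bounded_below_on_subspace[OF minimal subspace_coordinate_kernel[OF T(1)]
        closed_coordinate_kernel[OF T(2)] _ S(1) \<delta> C] S(2) by blast
  with no_embedding show False by contradiction
qed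

text \<open>Outside \<open>E_set xs\<close> the value of \<open>lim\<close> is arbitrary.\<close>
definition E_sum :: "(nat \<Rightarrow> 'a::banach) \<Rightarrow> (nat \<Rightarrow> real) \<Rightarrow> 'a" where
  "E_sum xs z = lim (\<lambda>m. \<Sum>n\<le>m. z n *\<^sub>R xs n)"

lemma E_sum_LIMSEQ: "z \<in> E_set xs \<Longrightarrow> (\<lambda>m. \<Sum>n\<le>m. z n *\<^sub>R xs n) \<longlonglongrightarrow> E_sum xs z"
  unfolding E_set_def E_sum_def by (simp add: convergent_LIMSEQ_iff)

lemma E_set_bdd_above:
  "z \<in> E_set xs \<Longrightarrow> bdd_above (range (\<lambda>m. norm (\<Sum>n\<le>m. z n *\<^sub>R xs n)))"
  unfolding E_set_def by (intro Bseq_bdd_above' convergent_imp_Bseq) simp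

lemma norm_partial_sum_le_E_norm:
  "z \<in> E_set xs \<Longrightarrow> norm (\<Sum>n\<le>m. z n *\<^sub>R xs n) \<le> E_norm xs z"
  unfolding E_norm_def by (rule cSUP_upper) (simp_all add: E_set_bdd_above)

lemma norm_E_sum_le_E_norm: "z \<in> E_set xs \<Longrightarrow> norm (E_sum xs z) \<le> E_norm xs z"
  by (rule tendsto_upperbound[OF tendsto_norm[OF E_sum_LIMSEQ]])
     (simp_all add: norm_partial_sum_le_E_norm)

lemma abs_le_E_norm:
  assumes z: "z \<in> E_set xs" and unit: "norm (xs n) = 1"
  shows "\<bar>z n\<bar> \<le> 2 * E_norm xs z"
proof (cases n)
  case 0
  then show ?thesis
    using norm_partial_sum_le_E_norm[OF z, of 0] unit
      norm_ge_zero[of "\<Sum>n\<le>0. z n *\<^sub>R xs n"] by simp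
next
  case (Suc k)
  have "\<bar>z n\<bar> = norm ((\<Sum>i\<le>n. z i *\<^sub>R xs i) - (\<Sum>i\<le>k. z i *\<^sub>R xs i))"
    using unit by (simp add: Suc)
  also have "\<dots> \<le> 2 * E_norm xs z"
    using norm_triangle_ineq4 norm_partial_sum_le_E_norm[OF z] by (smt (verit))
  finally show ?thesis .
qed

lemma E_sum_add:
  assumes "z \<in> E_set xs" "w \<in> E_set xs"
  shows "E_sum xs (z + w) = E_sum xs z + E_sum xs w"
proof -
  have "(\<lambda>m. \<Sum>n\<le>m. (z + w) n *\<^sub>R xs n) \<longlonglongrightarrow> E_sum xs z + E_sum xs w"
    using tendsto_add[OF E_sum_LIMSEQ[OF assms(1)] E_sum_LIMSEQ[OF assms(2)]]
    by (simp add: scaleR_add_left sum.distrib)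
  moreover from this have "z + w \<in> E_set xs"
    unfolding E_set_def by (blast intro: convergentI)
  ultimately show ?thesis
    using E_sum_LIMSEQ LIMSEQ_unique by blast
qed

lemma E_sum_scale:
  assumes "z \<in> E_set xs"
  shows "E_sum xs (c *\<^sub>R z) = c *\<^sub>R E_sum xs z"
proof -
  have "(\<lambda>m. \<Sum>n\<le>m. (c *\<^sub>R z) n *\<^sub>R xs n) \<longlonglongrightarrow> c *\<^sub>R E_sum xs z"
    using tendsto_scaleR[OF tendsto_const E_sum_LIMSEQ[OF assms]]
    by (simp add: scaleR_fun_def scaleR_sum_right)
  moreover from this have "c *\<^sub>R z \<in> E_set xs"
    unfolding E_set_def by (blast intro: convergentI)
  ultimately show ?thesis
    using E_sum_LIMSEQ LIMSEQ_unique by blast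
qed

lemma linear_partial_sum_comp:
  fixes xs :: "nat \<Rightarrow> 'x::real_vector"
  assumes "linear T"
  shows "linear (\<lambda>x. \<Sum>n\<le>m. T x n *\<^sub>R xs n)"
  using assms by (intro linearI)
    (simp_all add: linear_add linear_scale scaleR_add_left sum.distrib scaleR_sum_right scaleR_fun_def)

lemma linear_E_sum_comp:
  assumes "linear T" "range T \<subseteq> E_set xs"
  shows "linear (\<lambda>x. E_sum xs (T x))"
proof (rule linearI)
  have E: "T x \<in> E_set xs" for x using assms(2) by blast
  show "E_sum xs (T (x + y)) = E_sum xs (T x) + E_sum xs (T y)" for x y
    using E by (simp add: linear_add[OF assms(1)] E_sum_add)
  show "E_sum xs (T (c *\<^sub>R x)) = c *\<^sub>R E_sum xs (T x)" for c x
    using E by (simp add: linear_scale[OF assms(1)] E_sum_scale)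
qed

lemma bounded_linear_coordinate_into_E_set:
  fixes T :: "'a::real_normed_vector \<Rightarrow> nat \<Rightarrow> real"
  assumes T: "linear T" "range T \<subseteq> E_set xs" and unit: "\<And>n. norm (xs n) = 1"
    and bound: "\<And>x. E_norm xs (T x) \<le> \<beta> * norm x"
  shows "bounded_linear (\<lambda>x. T x n)"
proof (rule bounded_linear_intro[where K = "2 * \<beta>"])
  show "T (x + y) n = T x n + T y n" "T (r *\<^sub>R x) n = r *\<^sub>R T x n" for x y r
    using T(1) by (simp_all add: linear_add linear_scale scaleR_fun_def)
  show "norm (T x n) \<le> norm x * (2 * \<beta>)" for x
  proof -
    have "T x \<in> E_set xs" using T(2) by blast
    then show ?thesis
      using abs_le_E_norm[of "T x" xs n] unit bound[of x] by (simp add: algebra_simps)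
  qed
qed

lemma minimal_not_embeds_into_E:
  fixes xs :: "nat \<Rightarrow> 'x::banach"
  assumes minimal: "minimal_banach TYPE('z::banach)"
    and no_c0: "\<not> embeds c0_set c0_norm (UNIV::'z set) norm"
    and no_X: "\<not> embeds (UNIV::'z set) norm (UNIV::'x set) norm"
    and unit: "\<And>n. norm (xs n) = 1"
  shows "\<not> embeds (UNIV::'z set) norm (E_set xs) (E_norm xs)"
proof
  assume "embeds (UNIV::'z set) norm (E_set xs) (E_norm xs)"
  then obtain T :: "'z \<Rightarrow> nat \<Rightarrow> real" and \<alpha> \<beta> where T: "linear T" "range T \<subseteq> E_set xs"
    and \<alpha>: "0 < \<alpha>" and \<beta>: "0 < \<beta>"
    and equivalent: "\<And>x. \<alpha> * norm x \<le> E_norm xs (T x) \<and> E_norm xs (T x) \<le> \<beta> * norm x"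
    by (rule embeds_UNIV_E) blast
  have E: "T x \<in> E_set xs" for x using T(2) by blast
  define L where "L m x = (\<Sum>n\<le>m. T x n *\<^sub>R xs n)" for m x
  interpret seminorm_sequence "\<lambda>m x. norm (L m x)"
    using linear_partial_sum_comp[OF T(1)] E_set_bdd_above[OF E] unfolding L_def
    by (rule seminorm_sequence_norm_linear)
  have qsup_eq: "qsup x = E_norm xs (T x)" for x
    unfolding qsup_def by (simp add: E_norm_def L_def)
  define S where "S x = E_sum xs (T x)" for x
  have S_linear: "linear S"
    unfolding S_def using T by (rule linear_E_sum_comp)
  have S_bound: "norm (S x) \<le> \<beta> * norm x" for x
    using norm_E_sum_le_E_norm[OF E] equivalent order_trans unfolding S_def by blast
  have "bounded_linear (\<lambda>x. T x n)" for n
    using T unit equivalent[THEN conjunct2] by (rule bounded_linear_coordinate_into_E_set)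
  note small_image = exists_coordinate_kernel_element_with_small_image[OF minimal no_X T(1) this
      S_linear S_bound \<beta>]
  have "embeds c0_set c0_norm (UNIV::'z set) norm"
  proof (rule embeds_c0_if_small_tails[OF seminorm_sequence_axioms \<alpha> \<beta>])
    show "\<alpha> * norm x \<le> qsup x \<and> qsup x \<le> \<beta> * norm x" for x
      using equivalent qsup_eq by simp
    fix p :: nat and \<delta> :: real assume \<delta>: "0 < \<delta>"
    obtain u where u: "\<forall>n<p. T u n = 0" "u \<noteq> 0" and "norm (S u) < \<delta> * \<alpha> * norm u"
      using small_image \<delta> \<alpha> by (metis mult_pos_pos)
    moreover have "\<delta> * \<alpha> * norm u \<le> \<delta> * qsup u"
      using \<delta> equivalent[of u] qsup_eq[of u] by (simp add: mult.assoc)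
    ultimately have "norm (S u) < \<delta> * qsup u" by linarith
    moreover have "(\<lambda>m. norm (L m u)) \<longlonglongrightarrow> norm (S u)"
      unfolding L_def S_def using E by (intro tendsto_norm E_sum_LIMSEQ)
    ultimately have "\<forall>\<^sub>F m in sequentially. norm (L m u) < \<delta> * qsup u"
      by (rule order_tendstoD(2)[rotated])
    then have "\<forall>\<^sub>F m in sequentially. norm (L m u) \<le> \<delta> * qsup u"
      by (rule eventually_mono) simp
    moreover have "L m u = 0" if "m < p" for m
      using u(1) that by (simp add: L_def)
    ultimately show "\<exists>u. u \<noteq> 0 \<and> (\<forall>m<p. norm (L m u) = 0) \<and>
        (\<forall>\<^sub>F m in sequentially. norm (L m u) \<le> \<delta> * qsup u)"
      using u(2) by auto
  qed
  with no_c0 show False by contradiction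
qed

theorem corollary25:
  assumes "minimal_banach TYPE('z::banach)"
    and "\<not> embeds c0_set c0_norm (UNIV::'z set) norm"
    and "separable_banach TYPE('x::banach)"
    and "\<not> embeds (UNIV::'z set) norm (UNIV::'x set) norm"
  shows "((UNIV::'x set) = {0} \<longrightarrow> \<not> embeds (UNIV::'z set) norm c0_set c0_norm) \<and>
         (\<forall>xs::nat \<Rightarrow> 'x. range xs \<subseteq> sphere 0 1 \<and> sphere 0 1 \<subseteq> closure (range xs)
            \<longrightarrow> \<not> embeds (UNIV::'z set) norm (E_set xs) (E_norm xs))"
proof (intro conjI impI allI)
  show "\<not> embeds (UNIV::'z set) norm c0_set c0_norm"
    using assms(1,2) by (rule minimal_not_embeds_into_c0)
  fix xs :: "nat \<Rightarrow> 'x"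
  assume "range xs \<subseteq> sphere 0 1 \<and> sphere 0 1 \<subseteq> closure (range xs)"
  then have "xs n \<in> sphere 0 1" for n by blast
  then have "norm (xs n) = 1" for n by simp
  then show "\<not> embeds (UNIV::'z set) norm (E_set xs) (E_norm xs)"
    by (rule minimal_not_embeds_into_E[OF assms(1,2,4)])
qed

end
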